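(* For all unit types $U,U'$ and all scalars $\alpha,\beta\in\mathcal S$: if $\alpha.U\equiv\beta.U'$ then $\alpha=\beta$, and if moreover $\alpha\neq0$ then $U\equiv U'$.
   Context: Fix a commutative ring $(\mathcal S,+,\times)$. Types: $T ::= U \mid \forall X.T \mid \alpha.T \mid \overline0$; unit types: $U ::= X \mid U\to T \mid \forall X.U$ ($\alpha\in\mathcal S$, $X$ type variables). Type equivalence $\equiv$ is the least congruence on types with $\alpha.\overline0\equiv\overline0$, $0.T\equiv\overline0$, $1.T\equiv T$, $\alpha.(\beta.T)\equiv(\alpha\times\beta).T$, $\forall X.\alpha.T\equiv\alpha.\forall X.T$. *)

theory Defs
  imports Main
begin

text \<open>Types over a scalar type 'a (a commutative ring), with type variables and
  binders represented by de Bruijn indices (so alpha-equivalent types are equal).\<close>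

datatype 'a ty = TVar nat | Arr "'a ty" "'a ty" | All "'a ty" | Scal 'a "'a ty" | Zero

fun is_unit :: "'a ty \<Rightarrow> bool" and is_type :: "'a ty \<Rightarrow> bool" where
  "is_unit (TVar n) = True"
| "is_unit (Arr A B) = (is_unit A \<and> is_type B)"
| "is_unit (All A) = is_unit A"
| "is_unit (Scal a A) = False"
| "is_unit Zero = False"
| "is_type (TVar n) = True"
| "is_type (Arr A B) = (is_unit A \<and> is_type B)"
| "is_type (All A) = is_type A"
| "is_type (Scal a A) = is_type A"
| "is_type Zero = True"

inductive ty_equiv :: "('a::comm_ring_1) ty \<Rightarrow> 'a ty \<Rightarrow> bool" (infix "\<equiv>\<^sub>T" 50) where
  eq_refl: "is_type T \<Longrightarrow> T \<equiv>\<^sub>T T"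
| eq_sym: "T \<equiv>\<^sub>T R \<Longrightarrow> R \<equiv>\<^sub>T T"
| eq_trans: "T \<equiv>\<^sub>T R \<Longrightarrow> R \<equiv>\<^sub>T V \<Longrightarrow> T \<equiv>\<^sub>T V"
| ax_scal_zero: "Scal a Zero \<equiv>\<^sub>T Zero"
| ax_zero_scal: "is_type T \<Longrightarrow> Scal 0 T \<equiv>\<^sub>T Zero"
| ax_one: "is_type T \<Longrightarrow> Scal 1 T \<equiv>\<^sub>T T"
| ax_mult: "is_type T \<Longrightarrow> Scal a (Scal b T) \<equiv>\<^sub>T Scal (a * b) T"
| ax_all_scal: "is_type T \<Longrightarrow> All (Scal a T) \<equiv>\<^sub>T Scal a (All T)"
| cong_arr: "U \<equiv>\<^sub>T U' \<Longrightarrow> is_unit U \<Longrightarrow> is_unit U' \<Longrightarrow> T \<equiv>\<^sub>T T' \<Longrightarrow> Arr U T \<equiv>\<^sub>T Arr U' T'"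
| cong_all: "T \<equiv>\<^sub>T T' \<Longrightarrow> All T \<equiv>\<^sub>T All T'"
| cong_scal: "T \<equiv>\<^sub>T T' \<Longrightarrow> Scal a T \<equiv>\<^sub>T Scal a T'"

end

theory Submission
  imports Defs
begin

text \<open>Every well-formed type is equivalent either to \<open>0\<close> or to \<open>a.V\<close> with \<open>a \<noteq> 0\<close> and \<open>V\<close> a
  unit type, and this normal form can be computed structurally, pushing scalars out of
  binders and multiplying them together. The computed normal form is invariant under every
  rule of \<open>\<equiv>\<close>, and a unit type \<open>U\<close> normalises to \<open>1.V\<close> with \<open>U \<equiv> V\<close>. Hence \<open>\<alpha>.U \<equiv> \<beta>.U'\<close>
  forces the normal forms of \<open>\<alpha>.U\<close> and \<open>\<beta>.U'\<close>, i.e. \<open>\<alpha>.V\<close> and \<open>\<beta>.V'\<close> (or \<open>0\<close>), to coincide.\<close>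

definition nf_scal :: "'a::comm_ring_1 \<Rightarrow> 'a ty \<Rightarrow> ('a \<times> 'a ty) option" where
  "nf_scal a V = (if a = 0 then None else Some (a, V))"

definition nf_to_ty :: "('a \<times> 'a ty) option \<Rightarrow> 'a ty" where
  "nf_to_ty x = (case x of None \<Rightarrow> Zero | Some (a, V) \<Rightarrow> Scal a V)"

text \<open>The unit part of a normal form; the value \<open>Zero\<close> at \<open>None\<close> is junk, since \<open>nf_unit\<close>
  is only applied to normal forms of unit types.\<close>

definition nf_unit :: "('a \<times> 'a ty) option \<Rightarrow> 'a ty" where
  "nf_unit x = (case x of None \<Rightarrow> Zero | Some (a, V) \<Rightarrow> V)"

fun nf :: "('a::comm_ring_1) ty \<Rightarrow> ('a \<times> 'a ty) option" where
  "nf (TVar n) = nf_scal 1 (TVar n)"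
| "nf (Arr A B) = nf_scal 1 (Arr (nf_unit (nf A)) (nf_to_ty (nf B)))"
| "nf (All A) = (case nf A of None \<Rightarrow> None | Some (a, V) \<Rightarrow> Some (a, All V))"
| "nf (Scal a A) = (case nf A of None \<Rightarrow> None | Some (b, V) \<Rightarrow> nf_scal (a * b) V)"
| "nf Zero = None"

lemma nf_scal_eq_iff:
  "nf_scal a V = nf_scal b W \<longleftrightarrow> a = b \<and> (a \<noteq> 0 \<longrightarrow> V = W)"
  by (auto simp: nf_scal_def)

lemma nf_Some_nonzero: "nf T = Some (b, V) \<Longrightarrow> b \<noteq> 0"
  by (induction T arbitrary: b V) (auto simp: nf_scal_def split: option.splits if_splits)

lemma nf_equiv: "T \<equiv>\<^sub>T T' \<Longrightarrow> nf T = nf T'"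
proof (induction rule: ty_equiv.induct)
  case (ax_one T)
  then show ?case by (auto simp: nf_scal_def split: option.splits dest: nf_Some_nonzero)
next
  case (ax_mult T a b)
  then show ?case by (auto simp: nf_scal_def mult.assoc split: option.splits)
qed (auto simp: nf_scal_def split: option.splits)

lemma is_type_if_is_unit: "is_unit T \<Longrightarrow> is_type T"
  by (induction T) auto

lemma nf_unit_coeff_one:
  assumes "(1::'a::comm_ring_1) \<noteq> 0" and "is_unit (U :: 'a ty)"
  shows "\<exists>V. nf U = Some (1, V)"
  using assms(2) by (induction U) (auto simp: nf_scal_def assms(1))

lemma nf_is_unit: "nf T = Some (a, V) \<Longrightarrow> is_type T \<Longrightarrow> is_unit V"
proof (induction T arbitrary: a V)
  case (Arr A B)
  then have nontriv: "(1::'a) \<noteq> 0" by (simp add: nf_scal_def split: if_splits)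
  from Arr.prems(2) have "is_unit A" and "is_type B" by auto
  with nf_unit_coeff_one[OF nontriv] obtain W where W: "nf A = Some (1, W)" by blast
  with Arr.IH(1) \<open>is_unit A\<close> have "is_unit (nf_unit (nf A))"
    by (simp add: nf_unit_def is_type_if_is_unit)
  moreover from Arr.IH(2) \<open>is_type B\<close> have "is_type (nf_to_ty (nf B))"
    by (auto simp: nf_to_ty_def is_type_if_is_unit split: option.splits)
  ultimately show ?case using Arr.prems(1) by (auto simp: nf_scal_def split: if_splits)
qed (auto simp: nf_scal_def split: option.splits if_splits)

lemma is_type_nf_to_ty: "is_type T \<Longrightarrow> is_type (nf_to_ty (nf T))"
  by (auto simp: nf_to_ty_def is_type_if_is_unit dest: nf_is_unit split: option.splits)

lemmas [trans] = eq_trans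

lemma All_Zero_equiv: "All Zero \<equiv>\<^sub>T (Zero :: ('a::comm_ring_1) ty)"
proof -
  have "All Zero \<equiv>\<^sub>T All (Scal (0::'a) Zero)"
    by (rule cong_all, rule eq_sym, rule ax_zero_scal) simp
  also have "\<dots> \<equiv>\<^sub>T Scal 0 (All Zero)" by (rule ax_all_scal) simp
  also have "\<dots> \<equiv>\<^sub>T Zero" by (rule ax_zero_scal) simp
  finally show ?thesis .
qed

lemma equiv_nf_to_ty: "is_type T \<Longrightarrow> T \<equiv>\<^sub>T nf_to_ty (nf T)"
proof (induction T)
  case (TVar n)
  show ?case by (simp add: nf_to_ty_def nf_scal_def eq_sym ax_one)
next
  case (Arr A B)
  from Arr.prems have "is_unit A" "is_type B" by auto
  show ?case
  proof (cases "(1::'a) = 0")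
    \<comment> \<open>in the zero ring \<open>nf_scal 1\<close> is \<open>None\<close>, so \<open>Arr A B\<close> must be shown equivalent to \<open>0\<close>\<close>
    case True
    have "Arr A B \<equiv>\<^sub>T Scal 1 (Arr A B)" using Arr.prems by (rule eq_sym[OF ax_one])
    also have "\<dots> = Scal 0 (Arr A B)" using True by simp
    also have "\<dots> \<equiv>\<^sub>T Zero" using Arr.prems by (rule ax_zero_scal)
    finally show ?thesis using True by (simp add: nf_to_ty_def nf_scal_def)
  next
    case False
    with \<open>is_unit A\<close> obtain V where V: "nf A = Some (1, V)"
      using nf_unit_coeff_one by blast
    with \<open>is_unit A\<close> have "is_unit V" by (simp add: nf_is_unit is_type_if_is_unit)
    let ?R = "nf_to_ty (nf B)"
    have "A \<equiv>\<^sub>T Scal 1 V" using Arr.IH(1) \<open>is_unit A\<close> V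
      by (simp add: nf_to_ty_def is_type_if_is_unit)
    also have "\<dots> \<equiv>\<^sub>T V" by (rule ax_one) (simp add: \<open>is_unit V\<close> is_type_if_is_unit)
    finally have "Arr A B \<equiv>\<^sub>T Arr V ?R"
      using Arr.IH(2) \<open>is_type B\<close> \<open>is_unit A\<close> \<open>is_unit V\<close> by (intro cong_arr)
    also have "\<dots> \<equiv>\<^sub>T Scal 1 (Arr V ?R)"
      by (rule eq_sym[OF ax_one]) (simp add: \<open>is_unit V\<close> \<open>is_type B\<close> is_type_nf_to_ty)
    finally show ?thesis using V False by (simp add: nf_to_ty_def nf_scal_def nf_unit_def)
  qed
next
  case (All A)
  then have IH: "A \<equiv>\<^sub>T nf_to_ty (nf A)" by simp
  show ?case
  proof (cases "nf A")
    case None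
    with IH have "All A \<equiv>\<^sub>T All Zero" by (simp add: nf_to_ty_def cong_all)
    also have "\<dots> \<equiv>\<^sub>T Zero" by (rule All_Zero_equiv)
    finally show ?thesis using None by (simp add: nf_to_ty_def)
  next
    case (Some p)
    then obtain a V where p: "nf A = Some (a, V)" by (cases p) auto
    with IH have "All A \<equiv>\<^sub>T All (Scal a V)" by (simp add: nf_to_ty_def cong_all)
    also have "\<dots> \<equiv>\<^sub>T Scal a (All V)"
      using p All.prems by (intro ax_all_scal) (simp add: nf_is_unit is_type_if_is_unit)
    finally show ?thesis using p by (simp add: nf_to_ty_def)
  qed
next
  case (Scal a A)
  then have IH: "A \<equiv>\<^sub>T nf_to_ty (nf A)" by simp
  show ?case
  proof (cases "nf A")
    case None
    with IH have "Scal a A \<equiv>\<^sub>T Scal a Zero" by (simp add: nf_to_ty_def cong_scal)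
    also have "\<dots> \<equiv>\<^sub>T Zero" by (rule ax_scal_zero)
    finally show ?thesis using None by (simp add: nf_to_ty_def)
  next
    case (Some p)
    then obtain b V where p: "nf A = Some (b, V)" by (cases p) auto
    with Scal.prems have tV: "is_type V" by (simp add: nf_is_unit is_type_if_is_unit)
    from IH p have "Scal a A \<equiv>\<^sub>T Scal a (Scal b V)" by (simp add: nf_to_ty_def cong_scal)
    also have "\<dots> \<equiv>\<^sub>T Scal (a * b) V" using tV by (rule ax_mult)
    finally have e: "Scal a A \<equiv>\<^sub>T Scal (a * b) V" .
    show ?thesis
    proof (cases "a * b = 0")
      case True
      have "Scal (a * b) V \<equiv>\<^sub>T Zero" unfolding True using tV by (rule ax_zero_scal)
      with e p True show ?thesis by (auto simp: nf_to_ty_def nf_scal_def intro: eq_trans)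
    qed (use e p in \<open>simp add: nf_to_ty_def nf_scal_def\<close>)
  qed
next
  case Zero
  show ?case by (simp add: nf_to_ty_def eq_refl)
qed

lemma unit_equiv_nf_unit:
  assumes "is_unit U" and "nf U = Some (1, V)"
  shows "U \<equiv>\<^sub>T V"
proof -
  have "U \<equiv>\<^sub>T Scal 1 V"
    using equiv_nf_to_ty[of U] assms by (simp add: nf_to_ty_def is_type_if_is_unit)
  also have "\<dots> \<equiv>\<^sub>T V" using assms by (intro ax_one) (simp add: nf_is_unit is_type_if_is_unit)
  finally show ?thesis .
qed

theorem mainTheorem18:
  fixes U U' :: "('a::comm_ring_1) ty" and \<alpha> \<beta> :: 'a
  assumes "is_unit U" and "is_unit U'" and "Scal \<alpha> U \<equiv>\<^sub>T Scal \<beta> U'"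
  shows "\<alpha> = \<beta> \<and> (\<alpha> \<noteq> 0 \<longrightarrow> U \<equiv>\<^sub>T U')"
proof (cases "(1::'a) = 0")
  case True
  then show ?thesis by (metis mult_1 mult_zero_left)
next
  case False
  obtain V V' where V: "nf U = Some (1, V)" and V': "nf U' = Some (1, V')"
    using nf_unit_coeff_one[OF False] assms(1,2) by blast
  have "nf_scal \<alpha> V = nf_scal \<beta> V'"
    using nf_equiv[OF assms(3)] V V' by simp
  then have "\<alpha> = \<beta>" and "\<alpha> \<noteq> 0 \<Longrightarrow> V = V'" by (simp_all add: nf_scal_eq_iff)
  moreover have "U \<equiv>\<^sub>T V" and "U' \<equiv>\<^sub>T V'"
    using unit_equiv_nf_unit assms(1,2) V V' by blast+
  ultimately show ?thesis by (blast intro: eq_trans eq_sym)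
qed

end
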